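(* Let $\varrho,\sigma$ be density operators on a finite-dimensional Hilbert space $\mathcal H$ and $\alpha\in(0,1)$. Then \[ \limsup_{n\to\infty}\frac1nD_\alpha^{\mathrm{test}}(\varrho^{\otimes n}\|\sigma^{\otimes n})=\limsup_{n\to\infty}-\frac1n\log\min_{0\le T\le I}\Big\{\big(\operatorname{Tr}\varrho^{\otimes n}(I-T)\big)^{\frac{\alpha}{1-\alpha}}+\operatorname{Tr}\sigma^{\otimes n}T\Big\}, \] and the same equality holds with $\liminf$ in place of $\limsup$ on both sides (the minima being over operators $T$ on $\mathcal H^{\otimes n}$ with $0\le T\le I$). In particular, the limit on the left exists if and only if the limit on the right exists, in which case they are equal.
   Context: For probability vectors $p,q$ and $\alpha\in(0,1)$, $D_\alpha(p\|q)=\frac{1}{\alpha-1}\log\sum_x p(x)^\alpha q(x)^{1-\alpha}$. A test is an operator $0\le T\le I$; $\mathcal T(X):=(\operatorname{Tr}XT,\operatorname{Tr}X(I-T))$; $D_\alpha^{\mathrm{test}}(\varrho\|\sigma):=\max_{0\le T\le I}D_\alpha(\mathcal T(\varrho)\|\mathcal T(\sigma))$. *)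

theory Defs
  imports "HOL-Library.Extended_Real" "HOL-Library.Liminf_Limsup"
    "Jordan_Normal_Form.Jordan_Normal_Form" "Jordan_Normal_Form.Schur_Decomposition"
begin

text \<open>Operators on an n-dimensional Hilbert space = complex n x n matrices.\<close>

definition mtrace :: "complex mat \<Rightarrow> complex" where
  "mtrace A = (\<Sum>i<dim_row A. A $$ (i, i))"

definition psd :: "nat \<Rightarrow> complex mat \<Rightarrow> bool" where
  "psd n A \<longleftrightarrow> A \<in> carrier_mat n n \<and> A = mat_adjoint A \<and>
     (\<forall>v \<in> carrier_vec n. (A *\<^sub>v v) \<bullet>c v \<in> \<real> \<and> 0 \<le> Re ((A *\<^sub>v v) \<bullet>c v))"

definition density :: "nat \<Rightarrow> complex mat \<Rightarrow> bool" where
  "density n A \<longleftrightarrow> psd n A \<and> mtrace A = 1"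

definition is_test :: "nat \<Rightarrow> complex mat \<Rightarrow> bool" where
  "is_test n T \<longleftrightarrow> psd n T \<and> psd n (1\<^sub>m n - T)"

definition kron :: "complex mat \<Rightarrow> complex mat \<Rightarrow> complex mat" where
  "kron A B = mat (dim_row A * dim_row B) (dim_col A * dim_col B)
     (\<lambda>(i, j). A $$ (i div dim_row B, j div dim_col B) * B $$ (i mod dim_row B, j mod dim_col B))"

fun tpow :: "complex mat \<Rightarrow> nat \<Rightarrow> complex mat" where
  "tpow A 0 = 1\<^sub>m 1"
| "tpow A (Suc n) = kron (tpow A n) A"

definition renyi :: "real \<Rightarrow> ('x::finite \<Rightarrow> real) \<Rightarrow> ('x \<Rightarrow> real) \<Rightarrow> ereal" where
  "renyi \<alpha> p q = (let s = (\<Sum>x\<in>UNIV. p x powr \<alpha> * q x powr (1 - \<alpha>)) in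
      if s = 0 then \<infinity> else ereal (ln s / (\<alpha> - 1)))"

text \<open>Test channel: X \<mapsto> (Tr X T, Tr X (I - T)); True indexes the first outcome.\<close>
definition test_map :: "nat \<Rightarrow> complex mat \<Rightarrow> complex mat \<Rightarrow> bool \<Rightarrow> real" where
  "test_map n T X = (\<lambda>b. if b then Re (mtrace (X * T)) else Re (mtrace (X * (1\<^sub>m n - T))))"

text \<open>Test-measured Renyi divergence (the maximum is attained, so it equals the supremum).\<close>
definition D_test :: "real \<Rightarrow> nat \<Rightarrow> complex mat \<Rightarrow> complex mat \<Rightarrow> ereal" where
  "D_test \<alpha> n \<rho> \<sigma> = (SUP T\<in>{T. is_test n T}. renyi \<alpha> (test_map n T \<rho>) (test_map n T \<sigma>))"

text \<open>min over tests of (Tr \<rho>(I-T))^(\<alpha>/(1-\<alpha>)) + Tr \<sigma>T (attained, so equals the infimum).\<close>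
definition err_min :: "real \<Rightarrow> nat \<Rightarrow> complex mat \<Rightarrow> complex mat \<Rightarrow> real" where
  "err_min \<alpha> n \<rho> \<sigma> = (INF T\<in>{T. is_test n T}.
      Re (mtrace (\<rho> * (1\<^sub>m n - T))) powr (\<alpha> / (1 - \<alpha>)) + Re (mtrace (\<sigma> * T)))"

definition neg_log :: "real \<Rightarrow> ereal" where
  "neg_log x = (if x = 0 then \<infinity> else ereal (- ln x))"

end

theory Submission
  imports Defs "HOL-Analysis.Extended_Real_Limits"
begin

text \<open>For every n the two quantities differ by at most ln 4 / (1 - \<alpha>), so after division by n
  they have the same limsup and liminf. For a test T with error probabilities x = Tr \<rho>(I - T) and
  y = Tr \<sigma>T, the measured Renyi divergence is -log of the affinity
  (1 - x)^\<alpha> y^(1 - \<alpha>) + x^\<alpha> (1 - y)^(1 - \<alpha>), divided by 1 - \<alpha>. The affinity is at most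
  2 (x^(\<alpha>/(1 - \<alpha>)) + y)^(1 - \<alpha>), and at least a quarter of the same expression taken at T or
  at I - T. On the operator side one only needs that tensor powers of density matrices are density
  matrices and that Tr P T \<ge> 0 for positive semidefinite P and T; both follow from writing a
  positive semidefinite matrix as a sum of rank-one matrices u u^*, which Cholesky-type
  elimination provides.\<close>

lemma neg_log_antimono:
  assumes "0 \<le> x" "x \<le> y" shows "neg_log y \<le> neg_log x"
  using assms by (auto simp: neg_log_def)

lemma ereal_less_neg_log_iff:
  assumes "0 \<le> x" shows "ereal B < neg_log x \<longleftrightarrow> x < exp (- B)"
  using assms ln_less_cancel_iff[of x "exp (- B)"] by (auto simp: neg_log_def)

lemma neg_log_INF:
  fixes e :: "'i \<Rightarrow> real"
  assumes "I \<noteq> {}" "\<And>i. i \<in> I \<Longrightarrow> 0 \<le> e i"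
  shows "neg_log (INF i\<in>I. e i) = (SUP i\<in>I. neg_log (e i))"
proof (rule antisym)
  have bdd: "bdd_below (e ` I)" using assms(2) by (intro bdd_belowI[of _ 0]) auto
  have E0: "0 \<le> (INF i\<in>I. e i)" using assms by (intro cINF_greatest) auto
  show "(SUP i\<in>I. neg_log (e i)) \<le> neg_log (INF i\<in>I. e i)"
    using bdd E0 by (intro SUP_least neg_log_antimono cINF_lower) auto
  show "neg_log (INF i\<in>I. e i) \<le> (SUP i\<in>I. neg_log (e i))"
  proof (rule dense_le)
    fix z assume z: "z < neg_log (INF i\<in>I. e i)"
    show "z \<le> (SUP i\<in>I. neg_log (e i))"
    proof (cases z)
      case (real B)
      then obtain i where i: "i \<in> I" "e i < exp (- B)"
        using z E0 cINF_less_iff[OF assms(1) bdd] by (auto simp: ereal_less_neg_log_iff)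
      then have "z < neg_log (e i)" using assms(2) by (simp add: real ereal_less_neg_log_iff)
      then show ?thesis using i(1) by (intro SUP_upper2[of i]) auto
    qed (use z in auto)
  qed
qed

lemma neg_log_le_of_powr_le:
  fixes u s p c :: real
  assumes "0 \<le> u" "0 < p" "0 < c" "u powr p \<le> c * s"
  shows "ereal (1 / p) * neg_log s \<le> neg_log u + ereal (ln c / p)"
proof (cases "u = 0")
  case False
  with assms have "0 < u" by simp
  with assms have "0 < c * s" using powr_gt_zero[of u p] by linarith
  with assms have "0 < s" by (simp add: zero_less_mult_iff)
  have "p * ln u \<le> ln c + ln s"
    using assms \<open>0 < u\<close> \<open>0 < s\<close> ln_le_cancel_iff[of "u powr p" "c * s"] by (simp add: ln_mult)
  then have "- ln s / p \<le> - ln u + ln c / p"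
    using assms by (simp add: field_simps)
  then show ?thesis using \<open>0 < u\<close> \<open>0 < s\<close> by (simp add: neg_log_def)
qed (simp add: neg_log_def)

lemma neg_log_le_of_le_powr:
  fixes u s p c :: real
  assumes "0 \<le> u" "0 \<le> s" "0 < p" "0 < c" "s \<le> c * u powr p"
  shows "neg_log u \<le> ereal (1 / p) * neg_log s + ereal (ln c / p)"
proof (cases "s = 0")
  case False
  then have "0 < u" "0 < s" using assms by (auto intro: neq_le_trans)
  then have "ln s \<le> ln c + p * ln u"
    using assms ln_le_cancel_iff[of s "c * u powr p"] by (simp add: ln_mult)
  then have "- ln u \<le> - ln s / p + ln c / p"
    using assms by (simp add: field_simps)
  then show ?thesis using \<open>0 < u\<close> \<open>0 < s\<close> by (simp add: neg_log_def)
qed (use assms in \<open>simp add: neg_log_def\<close>)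

section \<open>Affinity and error cost of a binary test\<close>

definition affinity :: "real \<Rightarrow> real \<Rightarrow> real \<Rightarrow> real" where
  "affinity a x y = (1 - x) powr a * y powr (1 - a) + x powr a * (1 - y) powr (1 - a)"

definition err_cost :: "real \<Rightarrow> real \<Rightarrow> real \<Rightarrow> real" where
  "err_cost a x y = x powr (a / (1 - a)) + y"

lemma affinity_compl: "affinity a (1 - x) (1 - y) = affinity a x y"
  by (simp add: affinity_def)

lemma powr_split_exponent:
  fixes x a :: real
  assumes "0 \<le> x" "a < 1" shows "x powr a = (x powr (a / (1 - a))) powr (1 - a)"
proof -
  have "a / (1 - a) * (1 - a) = a" using assms by (simp add: field_simps)
  then show ?thesis by (simp add: powr_powr)
qed

lemma powr_add_le_double:
  fixes u v r :: real
  assumes "0 \<le> u" "0 \<le> v" "0 < r" "r \<le> 1"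
  shows "(u + v) powr r \<le> 2 * (u powr r + v powr r)"
proof -
  have "(u + v) powr r \<le> (2 * max u v) powr r"
    using assms by (intro powr_mono2) auto
  also have "\<dots> = 2 powr r * max u v powr r"
    using assms by (simp add: powr_mult)
  also have "\<dots> \<le> 2 * (u powr r + v powr r)"
  proof (rule mult_mono)
    show "2 powr r \<le> (2::real)" using powr_mono[of r 1 2] assms by simp
    show "max u v powr r \<le> u powr r + v powr r"
      using assms by (cases "u \<le> v") (auto simp: max_def)
  qed auto
  finally show ?thesis .
qed

lemma half_le_powr:
  fixes t r :: real assumes "1/2 \<le> t" "0 \<le> r" "r \<le> 1" shows "1/2 \<le> t powr r"
proof -
  have "(1/2::real) = (1/2) powr 1" by simp
  also have "\<dots> \<le> (1/2) powr r" using assms by (intro powr_mono') auto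
  also have "\<dots> \<le> t powr r" using assms by (intro powr_mono2) auto
  finally show ?thesis .
qed

lemma affinity_le_err_cost:
  assumes "0 \<le> x" "x \<le> 1" "0 \<le> y" "y \<le> 1" "0 < a" "a < 1"
  shows "affinity a x y \<le> 2 * err_cost a x y powr (1 - a)"
proof -
  have "(1 - x) powr a * y powr (1 - a) \<le> y powr (1 - a)"
    using assms by (intro mult_left_le_one_le powr_le1) auto
  moreover have "x powr a * (1 - y) powr (1 - a) \<le> x powr a"
    using assms by (intro mult_right_le_one_le powr_le1) auto
  moreover have "y powr (1 - a) \<le> err_cost a x y powr (1 - a)"
    using assms unfolding err_cost_def by (intro powr_mono2) auto
  moreover have "x powr a \<le> err_cost a x y powr (1 - a)"
    using assms unfolding err_cost_def powr_split_exponent[OF assms(1,6)]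
    by (intro powr_mono2) auto
  ultimately show ?thesis unfolding affinity_def by linarith
qed

lemma err_cost_powr_le_two:
  assumes "0 \<le> x" "x \<le> 1" "0 \<le> y" "y \<le> 1" "0 < a" "a < 1"
  shows "err_cost a x y powr (1 - a) \<le> 2"
proof -
  have "x powr (a / (1 - a)) \<le> 1" using assms by (intro powr_le1) auto
  then have "err_cost a x y powr (1 - a) \<le> 2 powr (1 - a)"
    using assms unfolding err_cost_def by (intro powr_mono2) auto
  also have "\<dots> \<le> 2" using powr_mono[of "1 - a" 1 2] assms by simp
  finally show ?thesis .
qed

lemma err_cost_le_affinity_small:
  assumes "0 \<le> x" "x \<le> 1/2" "0 \<le> y" "y \<le> 1/2" "0 < a" "a < 1"
  shows "err_cost a x y powr (1 - a) \<le> 4 * affinity a x y"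
proof -
  have "1/2 \<le> (1 - x) powr a" "1/2 \<le> (1 - y) powr (1 - a)"
    using assms half_le_powr[of "1 - x" a] half_le_powr[of "1 - y" "1 - a"] by auto
  then have "y powr (1 - a) + x powr a \<le> 2 * affinity a x y"
    unfolding affinity_def using mult_right_mono[of "1/2" "(1 - x) powr a" "y powr (1 - a)"]
      mult_left_mono[of "1/2" "(1 - y) powr (1 - a)" "x powr a"] by auto
  moreover have "err_cost a x y powr (1 - a) \<le> 2 * (x powr a + y powr (1 - a))"
    unfolding err_cost_def powr_split_exponent[OF assms(1,6)]
    using assms by (intro powr_add_le_double) auto
  ultimately show ?thesis by argo
qed

lemma half_le_affinity_mixed:
  assumes "x \<le> 1/2" "1/2 \<le> y" "0 < a" "a < 1"
  shows "1/2 \<le> affinity a x y"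
proof -
  have "(1/2::real) powr a * (1/2) powr (1 - a) \<le> (1 - x) powr a * y powr (1 - a)"
    using assms by (intro mult_mono powr_mono2) auto
  then have "1/2 \<le> (1 - x) powr a * y powr (1 - a)" by (simp add: powr_add[symmetric])
  moreover have "0 \<le> x powr a * (1 - y) powr (1 - a)" by simp
  ultimately show ?thesis unfolding affinity_def by linarith
qed

text \<open>If x and y lie on the same side of 1/2, use the test itself or its complement, which has the
  same affinity; otherwise the affinity is at least 1/2.\<close>
lemma err_cost_le_affinity:
  assumes "0 \<le> x" "x \<le> 1" "0 \<le> y" "y \<le> 1" "0 < a" "a < 1"
  shows "err_cost a x y powr (1 - a) \<le> 4 * affinity a x y \<or>
    err_cost a (1 - x) (1 - y) powr (1 - a) \<le> 4 * affinity a x y"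
proof (cases "x \<le> 1/2 \<longleftrightarrow> y \<le> 1/2")
  case True
  then show ?thesis
    using err_cost_le_affinity_small[of x y a] err_cost_le_affinity_small[of "1 - x" "1 - y" a]
      assms affinity_compl[of a x y] by (cases "x \<le> 1/2") auto
next
  case False
  then have "1/2 \<le> affinity a x y"
    using half_le_affinity_mixed[of x y a] half_le_affinity_mixed[of "1 - x" "1 - y" a]
      assms affinity_compl[of a x y] by (cases "x \<le> 1/2") auto
  then show ?thesis using err_cost_powr_le_two[OF assms] by linarith
qed

lemma SUP_neg_log_affinity_bounds:
  fixes S :: "(real \<times> real) set" and a :: real
  assumes ne: "S \<noteq> {}" and range: "S \<subseteq> {0..1} \<times> {0..1}"
    and compl: "\<And>x y. (x, y) \<in> S \<Longrightarrow> (1 - x, 1 - y) \<in> S" and a: "0 < a" "a < 1"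
  defines "D \<equiv> SUP (x, y)\<in>S. ereal (1 / (1 - a)) * neg_log (affinity a x y)"
    and "N \<equiv> neg_log (INF (x, y)\<in>S. err_cost a x y)"
  shows "D \<le> N + ereal (ln 4 / (1 - a))" and "N \<le> D + ereal (ln 4 / (1 - a))"
proof -
  define E where "E = (INF (x, y)\<in>S. err_cost a x y)"
  have rng: "0 \<le> x" "x \<le> 1" "0 \<le> y" "y \<le> 1" if "(x, y) \<in> S" for x y
    using range that by auto
  have cost_nonneg: "0 \<le> err_cost a x y" if "(x, y) \<in> S" for x y
    using rng[OF that] by (simp add: err_cost_def)
  have bdd: "bdd_below ((\<lambda>(x, y). err_cost a x y) ` S)"
    using cost_nonneg by (intro bdd_belowI[of _ 0]) auto
  have E_le: "E \<le> err_cost a x y" if "(x, y) \<in> S" for x y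
    unfolding E_def using bdd that by (rule cINF_lower2) auto
  have E_nonneg: "0 \<le> E"
    unfolding E_def using ne cost_nonneg by (intro cINF_greatest) auto
  show "D \<le> N + ereal (ln 4 / (1 - a))"
    unfolding D_def N_def E_def[symmetric]
  proof (rule SUP_least)
    fix p assume "p \<in> S"
    then obtain x y where p: "p = (x, y)" and xy: "(x, y) \<in> S" by (cases p) auto
    have "E powr (1 - a) \<le> 4 * affinity a x y"
      using err_cost_le_affinity[OF rng[OF xy] a] E_le[OF xy] E_le[OF compl[OF xy]] E_nonneg a
        powr_mono2[of "1 - a" E "err_cost a x y"]
        powr_mono2[of "1 - a" E "err_cost a (1 - x) (1 - y)"]
      by force
    then show "(case p of (x, y) \<Rightarrow> ereal (1 / (1 - a)) * neg_log (affinity a x y))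
        \<le> neg_log E + ereal (ln 4 / (1 - a))"
      unfolding p using E_nonneg a by (auto intro: neg_log_le_of_powr_le)
  qed
  have "neg_log (err_cost a x y) \<le> D + ereal (ln 4 / (1 - a))" if xy: "(x, y) \<in> S" for x y
  proof -
    have "affinity a x y \<le> 2 * err_cost a x y powr (1 - a)"
      using affinity_le_err_cost[OF rng[OF xy] a] .
    then have "neg_log (err_cost a x y)
        \<le> ereal (1 / (1 - a)) * neg_log (affinity a x y) + ereal (ln 2 / (1 - a))"
      using cost_nonneg[OF xy] rng[OF xy] a
      by (intro neg_log_le_of_le_powr) (auto simp: affinity_def)
    also have "\<dots> \<le> D + ereal (ln 4 / (1 - a))"
    proof (rule add_mono)
      show "ereal (1 / (1 - a)) * neg_log (affinity a x y) \<le> D"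
        unfolding D_def using xy by (rule SUP_upper2) auto
      show "ereal (ln 2 / (1 - a)) \<le> ereal (ln 4 / (1 - a))"
        using a by (simp add: divide_right_mono)
    qed
    finally show ?thesis .
  qed
  moreover have "N = (SUP (x, y)\<in>S. neg_log (err_cost a x y))"
    unfolding N_def using ne cost_nonneg by (subst neg_log_INF) (auto simp: case_prod_beta)
  ultimately show "N \<le> D + ereal (ln 4 / (1 - a))"
    by (auto intro: SUP_least)
qed

section \<open>Positive semidefinite matrices as sums of rank-one matrices\<close>

definition sesq :: "nat \<Rightarrow> complex mat \<Rightarrow> (nat \<Rightarrow> complex) \<Rightarrow> (nat \<Rightarrow> complex) \<Rightarrow> complex" where
  "sesq n A f g = (\<Sum>i<n. \<Sum>j<n. A $$ (i, j) * f j * cnj (g i))"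

lemma sesq_diff_left: "sesq n A (\<lambda>j. f j - g j) h = sesq n A f h - sesq n A g h"
  by (simp add: sesq_def algebra_simps sum_subtractf)

lemma sesq_diff_right: "sesq n A f (\<lambda>i. g i - h i) = sesq n A f g - sesq n A f h"
  by (simp add: sesq_def algebra_simps sum_subtractf)

lemma sesq_unit_left:
  assumes "k < n"
  shows "sesq n A (\<lambda>j. if j = k then t else 0) g = t * (\<Sum>i<n. A $$ (i, k) * cnj (g i))"
proof -
  have "sesq n A (\<lambda>j. if j = k then t else 0) g =
      (\<Sum>i<n. \<Sum>j<n. if j = k then t * (A $$ (i, k) * cnj (g i)) else 0)"
    unfolding sesq_def by (intro sum.cong) auto
  then show ?thesis using assms by (simp add: sum_distrib_left)
qed

lemma sesq_unit_unit:
  assumes "k < n"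
  shows "sesq n A (\<lambda>j. if j = k then t else 0) (\<lambda>j. if j = k then t else 0)
    = t * cnj t * A $$ (k, k)"
proof -
  have "(\<Sum>i<n. A $$ (i, k) * cnj (if i = k then t else 0))
      = (\<Sum>i<n. if i = k then A $$ (k, k) * cnj t else 0)"
    by (intro sum.cong) auto
  then show ?thesis using assms by (simp add: sesq_unit_left)
qed

lemma sesq_swap:
  assumes "\<And>i j. i < n \<Longrightarrow> j < n \<Longrightarrow> A $$ (i, j) = cnj (A $$ (j, i))"
  shows "sesq n A g f = cnj (sesq n A f g)"
proof -
  have "cnj (A $$ (i, j) * f j * cnj (g i)) = A $$ (j, i) * cnj (f j) * g i"
    if "i < n" "j < n" for i j
    using assms[OF that(2) that(1)] by simp
  then have "cnj (sesq n A f g) = (\<Sum>i<n. \<Sum>j<n. A $$ (j, i) * cnj (f j) * g i)"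
    unfolding sesq_def cnj_sum by (intro sum.cong refl) auto
  also have "\<dots> = sesq n A g f"
    unfolding sesq_def by (subst sum.swap) (simp add: mult_ac)
  finally show ?thesis by simp
qed

lemma sesq_shift_unit:
  fixes f :: "nat \<Rightarrow> complex" and t :: complex
  assumes herm: "\<And>i j. i < n \<Longrightarrow> j < n \<Longrightarrow> A $$ (i, j) = cnj (A $$ (j, i))" and "k < n"
  defines "z \<equiv> \<Sum>i<n. A $$ (i, k) * cnj (f i)"
  shows "sesq n A (\<lambda>j. f j - (if j = k then t else 0)) (\<lambda>j. f j - (if j = k then t else 0))
    = sesq n A f f - t * z - cnj (t * z) + t * cnj t * A $$ (k, k)"
proof -
  let ?e = "\<lambda>j. if j = k then t else (0::complex)"
  have ef: "sesq n A ?e f = t * z" unfolding z_def using \<open>k < n\<close> by (rule sesq_unit_left)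
  have ee: "sesq n A ?e ?e = t * cnj t * A $$ (k, k)" using \<open>k < n\<close> by (rule sesq_unit_unit)
  have fe: "sesq n A f ?e = cnj (t * z)"
    by (subst sesq_swap[OF herm]) (simp_all add: ef)
  show ?thesis
    unfolding sesq_diff_left sesq_diff_right ef fe ee by simp
qed

lemma sesq_eq_cscalar_prod:
  assumes "A \<in> carrier_mat n n" "v \<in> carrier_vec n"
  shows "(A *\<^sub>v v) \<bullet>c v = sesq n A (($) v) (($) v)"
  using assms unfolding sesq_def scalar_prod_def
  by (auto simp: scalar_prod_def atLeast0LessThan sum_distrib_left mult_ac intro!: sum.cong)

lemma mat_adjoint_carrier: "A \<in> carrier_mat n n \<Longrightarrow> mat_adjoint A \<in> carrier_mat n n"
  unfolding mat_adjoint_def by (simp add: mat_of_rows_def)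

lemma mat_adjoint_index:
  "A \<in> carrier_mat n n \<Longrightarrow> i < n \<Longrightarrow> j < n \<Longrightarrow> mat_adjoint A $$ (i, j) = cnj (A $$ (j, i))"
  unfolding mat_adjoint_def by (simp add: mat_of_rows_def)

lemma psd_carrier: "psd n A \<Longrightarrow> A \<in> carrier_mat n n"
  by (simp add: psd_def)

lemma psd_hermitian:
  assumes "psd n A" "i < n" "j < n" shows "A $$ (i, j) = cnj (A $$ (j, i))"
  using assms mat_adjoint_index[of A n i j] unfolding psd_def by metis

lemma psd_sesq_nonneg:
  assumes "psd n A" shows "sesq n A f f \<in> \<real> \<and> 0 \<le> Re (sesq n A f f)"
proof -
  have "sesq n A f f = sesq n A (($) (Matrix.vec n f)) (($) (Matrix.vec n f))"
    unfolding sesq_def by (intro sum.cong) auto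
  also have "\<dots> = (A *\<^sub>v Matrix.vec n f) \<bullet>c Matrix.vec n f"
    using assms unfolding psd_def by (intro sesq_eq_cscalar_prod[symmetric]) auto
  finally show ?thesis using assms unfolding psd_def by auto
qed

lemma psd_of_sesq_nonneg:
  assumes A: "A \<in> carrier_mat n n"
    and herm: "\<And>i j. i < n \<Longrightarrow> j < n \<Longrightarrow> A $$ (i, j) = cnj (A $$ (j, i))"
    and nonneg: "\<And>f. sesq n A f f \<in> \<real> \<and> 0 \<le> Re (sesq n A f f)"
  shows "psd n A"
proof -
  have "A = mat_adjoint A"
  proof (rule eq_matI)
    fix i j assume "i < dim_row (mat_adjoint A)" "j < dim_col (mat_adjoint A)"
    then have ij: "i < n" "j < n" using mat_adjoint_carrier[OF A] by auto
    show "A $$ (i, j) = mat_adjoint A $$ (i, j)"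
      using herm[OF ij] mat_adjoint_index[OF A ij] by simp
  qed (use A mat_adjoint_carrier[OF A] in auto)
  moreover have "(A *\<^sub>v v) \<bullet>c v \<in> \<real> \<and> 0 \<le> Re ((A *\<^sub>v v) \<bullet>c v)" if "v \<in> carrier_vec n" for v
    using sesq_eq_cscalar_prod[OF A that] nonneg by simp
  ultimately show ?thesis using A unfolding psd_def by auto
qed

lemma psd_diag_nonneg:
  assumes "psd n A" "k < n" shows "A $$ (k, k) \<in> \<real> \<and> 0 \<le> Re (A $$ (k, k))"
proof -
  have "sesq n A (\<lambda>j. if j = k then 1 else 0) (\<lambda>j. if j = k then 1 else 0) = A $$ (k, k)"
    using sesq_unit_unit[OF assms(2), where t = 1] by simp
  then show ?thesis using psd_sesq_nonneg[OF assms(1)] by metis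
qed

lemma psd_diag_cnj: "psd n A \<Longrightarrow> k < n \<Longrightarrow> cnj (A $$ (k, k)) = A $$ (k, k)"
  using psd_diag_nonneg Reals_cnj_iff by blast

text \<open>A zero diagonal entry forces a zero column: otherwise moving from a unit vector
  far enough in direction k makes the quadratic form negative.\<close>
lemma psd_zero_diag_imp_zero_col:
  assumes A: "psd n A" and k: "k < n" and diag: "A $$ (k, k) = 0" and i: "i < n"
  shows "A $$ (i, k) = 0"
proof (rule ccontr)
  assume nz: "A $$ (i, k) \<noteq> 0"
  define e where "e j = (if j = i then 1 else 0 :: complex)" for j
  define z where "z = (\<Sum>l<n. A $$ (l, k) * cnj (e l))"
  define s where "s = (Re (sesq n A e e) + 1) / (2 * (cmod z)\<^sup>2)"
  define t where "t = complex_of_real s * cnj z"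
  have "z = A $$ (i, k)"
  proof -
    have "z = (\<Sum>l<n. if l = i then A $$ (i, k) else 0)"
      unfolding z_def e_def by (intro sum.cong) auto
    then show ?thesis using i by simp
  qed
  with nz have "0 < (cmod z)\<^sup>2" by simp
  have tz: "t * z = complex_of_real (s * (cmod z)\<^sup>2)"
    unfolding t_def using complex_norm_square[of z] by (simp add: mult_ac)
  have "sesq n A (\<lambda>j. e j - (if j = k then t else 0)) (\<lambda>j. e j - (if j = k then t else 0))
      = sesq n A e e - t * z - cnj (t * z) + t * cnj t * A $$ (k, k)"
    using sesq_shift_unit[OF psd_hermitian[OF A] k, where f = e and t = t] unfolding z_def .
  then have "Re (sesq n A (\<lambda>j. e j - (if j = k then t else 0)) (\<lambda>j. e j - (if j = k then t else 0)))
      = Re (sesq n A e e) - 2 * (s * (cmod z)\<^sup>2)"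
    unfolding diag tz by simp
  also have "\<dots> = -1"
    unfolding s_def using \<open>0 < (cmod z)\<^sup>2\<close> by (simp add: field_simps)
  finally show False using psd_sesq_nonneg[OF A] by (metis neg_0_le_iff_le not_one_le_zero)
qed

lemma psd_zero_diag_imp_zero_row:
  assumes "psd n A" "k < n" "A $$ (k, k) = 0" "j < n" shows "A $$ (k, j) = 0"
  using psd_hermitian[OF assms(1,2,4)] psd_zero_diag_imp_zero_col[OF assms] by simp

definition schur_compl :: "nat \<Rightarrow> nat \<Rightarrow> complex mat \<Rightarrow> complex mat" where
  "schur_compl n k A =
    Matrix.mat n n (\<lambda>(i, j). A $$ (i, j) - A $$ (i, k) * cnj (A $$ (j, k)) / A $$ (k, k))"

lemma sesq_schur_compl:
  fixes f :: "nat \<Rightarrow> complex"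
  assumes "psd n A" "k < n" "A $$ (k, k) \<noteq> 0"
  defines "z \<equiv> \<Sum>i<n. A $$ (i, k) * cnj (f i)"
  shows "sesq n (schur_compl n k A) f f
    = sesq n A (\<lambda>j. f j - (if j = k then cnj z / A $$ (k, k) else 0))
               (\<lambda>j. f j - (if j = k then cnj z / A $$ (k, k) else 0))"
proof -
  let ?a = "A $$ (k, k)"
  have "sesq n (schur_compl n k A) f f
      = sesq n A f f - (\<Sum>i<n. \<Sum>j<n. A $$ (i, k) * cnj (A $$ (j, k)) / ?a * f j * cnj (f i))"
    unfolding sesq_def schur_compl_def by (simp add: algebra_simps sum_subtractf)
  also have "\<dots> = sesq n A f f - z * cnj z / ?a"
    unfolding z_def cnj_sum sum_product sum_divide_distrib by (simp add: mult_ac)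
  also have "\<dots>
      = sesq n A f f - cnj z / ?a * z - cnj (cnj z / ?a * z) + cnj z / ?a * cnj (cnj z / ?a) * ?a"
    using assms psd_diag_cnj[OF assms(1,2)] by (simp add: field_simps)
  also have "\<dots> = sesq n A (\<lambda>j. f j - (if j = k then cnj z / ?a else 0))
               (\<lambda>j. f j - (if j = k then cnj z / ?a else 0))"
    unfolding z_def by (rule sesq_shift_unit[OF psd_hermitian[OF assms(1)] assms(2), symmetric])
  finally show ?thesis .
qed

lemma psd_schur_compl:
  assumes A: "psd n A" and k: "k < n" and a: "A $$ (k, k) \<noteq> 0"
  shows "psd n (schur_compl n k A)"
proof (rule psd_of_sesq_nonneg)
  show "schur_compl n k A \<in> carrier_mat n n" by (simp add: schur_compl_def)
  show "schur_compl n k A $$ (i, j) = cnj (schur_compl n k A $$ (j, i))" if "i < n" "j < n" for i j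
    using that psd_hermitian[OF A that] psd_diag_cnj[OF A k] by (simp add: schur_compl_def)
  show "sesq n (schur_compl n k A) f f \<in> \<real> \<and> 0 \<le> Re (sesq n (schur_compl n k A) f f)" for f
    unfolding sesq_schur_compl[OF A k a] by (rule psd_sesq_nonneg[OF A])
qed

lemma schur_compl_vanishing:
  assumes A: "psd n A" and k: "k < n" and a: "A $$ (k, k) \<noteq> 0"
    and vanish: "\<And>i j. i < n \<Longrightarrow> j < n \<Longrightarrow> i < k \<or> j < k \<Longrightarrow> A $$ (i, j) = 0"
    and ij: "i < n" "j < n" "i \<le> k \<or> j \<le> k"
  shows "schur_compl n k A $$ (i, j) = 0"
proof -
  have Bij: "schur_compl n k A $$ (i, j)
      = A $$ (i, j) - A $$ (i, k) * cnj (A $$ (j, k)) / A $$ (k, k)"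
    using ij by (simp add: schur_compl_def)
  consider "i < k" | "j < k" | "i = k" | "j = k" using ij by linarith
  then show ?thesis
  proof cases
    case 1 then show ?thesis using Bij vanish[of i j] vanish[of i k] ij k by simp
  next
    case 2 then show ?thesis using Bij vanish[of i j] vanish[of j k] ij k by simp
  next
    case 3 then show ?thesis using Bij psd_hermitian[OF A k ij(2)] a by simp
  next
    case 4 then show ?thesis using Bij psd_diag_cnj[OF A k] a by simp
  qed
qed

definition rank_one_sum :: "nat \<Rightarrow> (nat \<Rightarrow> complex) list \<Rightarrow> complex mat" where
  "rank_one_sum n us = Matrix.mat n n (\<lambda>(i, j). \<Sum>u\<leftarrow>us. u i * cnj (u j))"

lemma rank_one_sum_dim [simp]:
  "dim_row (rank_one_sum n us) = n" "dim_col (rank_one_sum n us) = n"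
  by (simp_all add: rank_one_sum_def)

lemma rank_one_sum_carrier [simp]: "rank_one_sum n us \<in> carrier_mat n n"
  by (simp add: carrier_matI)

lemma rank_one_sum_index:
  "i < n \<Longrightarrow> j < n \<Longrightarrow> rank_one_sum n us $$ (i, j) = (\<Sum>u\<leftarrow>us. u i * cnj (u j))"
  by (simp add: rank_one_sum_def)

lemma rank_one_sum_Nil: "rank_one_sum n [] = 0\<^sub>m n n"
  by (intro eq_matI) (auto simp: rank_one_sum_def)

text \<open>Cholesky-type elimination at the pivot k: a zero pivot has a zero row and column, a nonzero
  one splits off the rank-one matrix of its column and leaves the Schur complement, which again
  vanishes on the first k + 1 rows and columns.\<close>
lemma psd_rank_one_sum_vanishing:
  assumes "k \<le> n" "psd n A"
    and "\<And>i j. i < n \<Longrightarrow> j < n \<Longrightarrow> i < k \<or> j < k \<Longrightarrow> A $$ (i, j) = 0"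
  shows "\<exists>us. A = rank_one_sum n us"
  using assms
proof (induction k arbitrary: A rule: inc_induct)
  case base
  then have "A = 0\<^sub>m n n" using psd_carrier[of n A] by (intro eq_matI) auto
  then show ?case using rank_one_sum_Nil by metis
next
  case (step k)
  note A = \<open>psd n A\<close> and vanish = step.prems(2)
  have k: "k < n" using step.hyps by simp
  show ?case
  proof (cases "A $$ (k, k) = 0")
    case True
    have "A $$ (i, j) = 0" if "i < n" "j < n" "i < Suc k \<or> j < Suc k" for i j
      using that vanish[OF that(1,2)] psd_zero_diag_imp_zero_col[OF A k True, of i]
        psd_zero_diag_imp_zero_row[OF A k True, of j] less_Suc_eq by auto
    then show ?thesis using step.IH[OF A] by blast
  next
    case False
    define a where "a = A $$ (k, k)"
    obtain r where r: "a = complex_of_real r" "0 \<le> r"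
      using psd_diag_nonneg[OF A k] unfolding a_def by (auto elim!: Reals_cases)
    then have sqrt_a: "complex_of_real (sqrt r) * complex_of_real (sqrt r) = a"
      by (simp flip: of_real_mult)
    define u where "u i = A $$ (i, k) / sqrt r" for i
    have u_outer: "u i * cnj (u j) = A $$ (i, k) * cnj (A $$ (j, k)) / a" for i j
      unfolding u_def sqrt_a[symmetric] by simp
    obtain us where us: "schur_compl n k A = rank_one_sum n us"
      using step.IH[OF psd_schur_compl[OF A k False]] schur_compl_vanishing[OF A k False vanish]
      by (metis less_Suc_eq_le)
    have "A = rank_one_sum n (u # us)"
    proof (rule eq_matI)
      fix i j assume "i < dim_row (rank_one_sum n (u # us))" "j < dim_col (rank_one_sum n (u # us))"
      then have ij: "i < n" "j < n" by (simp_all add: rank_one_sum_def)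
      have "A $$ (i, j) = A $$ (i, k) * cnj (A $$ (j, k)) / a + schur_compl n k A $$ (i, j)"
        using ij by (simp add: schur_compl_def a_def)
      also have "\<dots> = u i * cnj (u j) + rank_one_sum n us $$ (i, j)"
        unfolding us using ij by (simp add: u_outer rank_one_sum_def)
      finally show "A $$ (i, j) = rank_one_sum n (u # us) $$ (i, j)"
        using ij by (simp add: rank_one_sum_def)
    qed (use psd_carrier[OF A] in \<open>auto simp: rank_one_sum_def\<close>)
    then show ?thesis ..
  qed
qed

lemma psd_imp_rank_one_sum: "psd n A \<Longrightarrow> \<exists>us. A = rank_one_sum n us"
  by (rule psd_rank_one_sum_vanishing[of 0]) auto

lemma sum_sum_list_swap: "(\<Sum>i\<in>S. \<Sum>u\<leftarrow>us. g u i) = (\<Sum>u\<leftarrow>us. \<Sum>i\<in>S. g u i)"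
  by (induction us) (simp_all add: sum.distrib)

lemma cnj_sum_list: "cnj (\<Sum>x\<leftarrow>xs. f x) = (\<Sum>x\<leftarrow>xs. cnj (f x))"
  by (induction xs) auto

lemma psd_rank_one_sum: "psd n (rank_one_sum n us)"
proof (rule psd_of_sesq_nonneg)
  show "rank_one_sum n us $$ (i, j) = cnj (rank_one_sum n us $$ (j, i))" if "i < n" "j < n" for i j
    using that by (simp add: rank_one_sum_index cnj_sum_list mult.commute)
  fix f :: "nat \<Rightarrow> complex"
  define z where "z u = (\<Sum>i<n. u i * cnj (f i))" for u
  have "sesq n (rank_one_sum n us) f f = (\<Sum>u\<leftarrow>us. z u * cnj (z u))"
    unfolding sesq_def z_def
    by (simp add: rank_one_sum_index sum_list_const_mult[symmetric] sum_list_mult_const[symmetric]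
        sum_sum_list_swap sum_product mult_ac)
  moreover have "(\<Sum>u\<leftarrow>us. z u * cnj (z u)) \<in> \<real> \<and> 0 \<le> Re (\<Sum>u\<leftarrow>us. z u * cnj (z u))"
    by (induction us) (auto simp: complex_mult_cnj intro: Reals_add)
  ultimately show "sesq n (rank_one_sum n us) f f \<in> \<real> \<and> 0 \<le> Re (sesq n (rank_one_sum n us) f f)"
    by simp
qed simp

section \<open>Tensor powers\<close>

lemma kron_carrier:
  "A \<in> carrier_mat p p \<Longrightarrow> B \<in> carrier_mat q q \<Longrightarrow> kron A B \<in> carrier_mat (p * q) (p * q)"
  unfolding kron_def by auto

lemma kron_index:
  assumes "A \<in> carrier_mat p p" "B \<in> carrier_mat q q" "i < p * q" "j < p * q"
  shows "kron A B $$ (i, j) = A $$ (i div q, j div q) * B $$ (i mod q, j mod q)"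
  using assms unfolding kron_def by auto

lemma sum_list_comprehension:
  "(\<Sum>x\<leftarrow>[f u w. u \<leftarrow> us, w \<leftarrow> ws]. g x) = (\<Sum>u\<leftarrow>us. \<Sum>w\<leftarrow>ws. g (f u w))"
  by (induction us) (simp_all add: comp_def)

lemma sum_list_mult_sum_list:
  fixes f g :: "_ \<Rightarrow> 'a :: semiring_0"
  shows "(\<Sum>u\<leftarrow>us. f u) * (\<Sum>w\<leftarrow>ws. g w) = (\<Sum>u\<leftarrow>us. \<Sum>w\<leftarrow>ws. f u * g w)"
  by (induction us) (simp_all add: distrib_right sum_list_const_mult)

lemma kron_rank_one_sum:
  "kron (rank_one_sum p us) (rank_one_sum q ws)
     = rank_one_sum (p * q) [\<lambda>i. u (i div q) * w (i mod q). u \<leftarrow> us, w \<leftarrow> ws]"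
  (is "_ = ?R")
proof (rule eq_matI)
  fix i j assume "i < dim_row ?R" "j < dim_col ?R"
  then have ij: "i < p * q" "j < p * q" by simp_all
  then have "0 < q" by (cases q) auto
  then have "i div q < p" "j div q < p" "i mod q < q" "j mod q < q"
    using ij by (simp_all add: less_mult_imp_div_less)
  then have "kron (rank_one_sum p us) (rank_one_sum q ws) $$ (i, j)
      = (\<Sum>u\<leftarrow>us. u (i div q) * cnj (u (j div q))) * (\<Sum>w\<leftarrow>ws. w (i mod q) * cnj (w (j mod q)))"
    using kron_index[OF rank_one_sum_carrier rank_one_sum_carrier ij]
    by (simp add: rank_one_sum_index)
  also have "\<dots> = ?R $$ (i, j)"
    using ij by (simp add: rank_one_sum_index sum_list_mult_sum_list sum_list_comprehension mult_ac)
  finally show "kron (rank_one_sum p us) (rank_one_sum q ws) $$ (i, j) = ?R $$ (i, j)" .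
qed (auto simp: kron_def rank_one_sum_def)

lemma tpow_rank_one_sum: "\<exists>vs. tpow (rank_one_sum d us) n = rank_one_sum (d ^ n) vs"
proof (induction n)
  case 0
  have "tpow (rank_one_sum d us) 0 = rank_one_sum 1 [\<lambda>_. 1]"
    by (intro eq_matI) (auto simp: rank_one_sum_def)
  then show ?case by auto
next
  case (Suc n)
  then obtain vs where "tpow (rank_one_sum d us) n = rank_one_sum (d ^ n) vs" by blast
  then show ?case
    unfolding tpow.simps power_Suc2 using kron_rank_one_sum[of "d ^ n" vs d us] by auto
qed

lemma tpow_carrier:
  assumes "A \<in> carrier_mat d d" shows "tpow A n \<in> carrier_mat (d ^ n) (d ^ n)"
proof (induction n)
  case (Suc n)
  then show ?case unfolding tpow.simps power_Suc2 using assms by (rule kron_carrier)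
qed simp

lemma psd_tpow: "psd d A \<Longrightarrow> psd (d ^ n) (tpow A n)"
  using psd_imp_rank_one_sum tpow_rank_one_sum psd_rank_one_sum by metis

lemma sum_lessThan_mult_div_mod:
  fixes g :: "nat \<Rightarrow> nat \<Rightarrow> 'a :: comm_monoid_add"
  shows "(\<Sum>i<p * q. g (i div q) (i mod q)) = (\<Sum>a<p. \<Sum>b<q. g a b)"
proof -
  have "a * q + b < p * q" if "a < p" "b < q" for a b
    using that mult_le_mono1[of "Suc a" p q] by simp
  moreover have "i mod q < q" if "i < p * q" for i
    using that by (cases "q = 0") auto
  ultimately have "(\<Sum>i<p * q. g (i div q) (i mod q)) = (\<Sum>(a, b)\<in>{..<p} \<times> {..<q}. g a b)"
    by (intro sum.reindex_bij_witness[where i = "\<lambda>(a, b). a * q + b"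
          and j = "\<lambda>i. (i div q, i mod q)"])
      (auto simp: less_mult_imp_div_less)
  then show ?thesis by (simp add: sum.cartesian_product)
qed

lemma mtrace_kron:
  assumes "A \<in> carrier_mat p p" "B \<in> carrier_mat q q"
  shows "mtrace (kron A B) = mtrace A * mtrace B"
proof -
  have "mtrace (kron A B) = (\<Sum>i<p * q. A $$ (i div q, i div q) * B $$ (i mod q, i mod q))"
    unfolding mtrace_def using kron_carrier[OF assms] kron_index[OF assms] by (intro sum.cong) auto
  also have "\<dots> = (\<Sum>a<p. \<Sum>b<q. A $$ (a, a) * B $$ (b, b))"
    by (rule sum_lessThan_mult_div_mod)
  also have "\<dots> = mtrace A * mtrace B"
    unfolding mtrace_def using assms by (simp add: sum_product)
  finally show ?thesis .
qed

lemma mtrace_tpow: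
  assumes "A \<in> carrier_mat d d" shows "mtrace (tpow A n) = mtrace A ^ n"
proof (induction n)
  case 0
  then show ?case by (simp add: mtrace_def)
next
  case (Suc n)
  then show ?case by (simp add: mtrace_kron[OF tpow_carrier[OF assms] assms])
qed

lemma density_tpow:
  assumes "density d \<rho>" shows "density (d ^ n) (tpow \<rho> n)"
proof -
  have "psd d \<rho>" "mtrace \<rho> = 1" using assms unfolding density_def by auto
  then show ?thesis unfolding density_def using psd_tpow mtrace_tpow[OF psd_carrier] by simp
qed

lemma mtrace_mult_index:
  assumes "A \<in> carrier_mat m m" "T \<in> carrier_mat m m"
  shows "mtrace (A * T) = (\<Sum>i<m. \<Sum>j<m. A $$ (i, j) * T $$ (j, i))"
  using assms unfolding mtrace_def by (auto simp: scalar_prod_def atLeast0LessThan intro!: sum.cong)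

lemma mtrace_mult_one_minus:
  assumes "A \<in> carrier_mat m m" "T \<in> carrier_mat m m"
  shows "mtrace (A * (1\<^sub>m m - T)) = mtrace A - mtrace (A * T)"
proof -
  have "A * (1\<^sub>m m - T) = A - A * T"
    using mult_minus_distrib_mat[OF assms(1) one_carrier_mat assms(2)] assms(1) by simp
  then show ?thesis unfolding mtrace_def using assms by (simp add: sum_subtractf)
qed

lemma mtrace_rank_one_sum_mult:
  assumes "T \<in> carrier_mat m m"
  shows "mtrace (rank_one_sum m us * T) = (\<Sum>u\<leftarrow>us. sesq m T u u)"
proof -
  have "mtrace (rank_one_sum m us * T) = (\<Sum>i<m. \<Sum>j<m. \<Sum>u\<leftarrow>us. T $$ (j, i) * u i * cnj (u j))"
    unfolding mtrace_mult_index[OF rank_one_sum_carrier assms]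
    by (intro sum.cong refl)
      (simp add: rank_one_sum_index sum_list_const_mult[symmetric]
        sum_list_mult_const[symmetric] mult_ac)
  also have "\<dots> = (\<Sum>u\<leftarrow>us. sesq m T u u)"
    unfolding sesq_def by (subst sum.swap) (simp add: sum_sum_list_swap)
  finally show ?thesis .
qed

lemma mtrace_rank_one_sum_mult_nonneg:
  assumes "psd m T" shows "0 \<le> Re (mtrace (rank_one_sum m us * T))"
  unfolding mtrace_rank_one_sum_mult[OF psd_carrier[OF assms]]
  using psd_sesq_nonneg[OF assms] by (induction us) auto

lemma mtrace_psd_mult_nonneg:
  assumes "psd m P" "psd m T" shows "0 \<le> Re (mtrace (P * T))"
  using psd_imp_rank_one_sum[OF assms(1)] mtrace_rank_one_sum_mult_nonneg[OF assms(2)] by metis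

lemma psd_zero: "psd n (0\<^sub>m n n)"
  by (rule psd_of_sesq_nonneg) (simp_all add: sesq_def)

lemma psd_one: "psd n (1\<^sub>m n)"
proof (rule psd_of_sesq_nonneg)
  fix f :: "nat \<Rightarrow> complex"
  have "sesq n (1\<^sub>m n) f f = (\<Sum>i<n. f i * cnj (f i))"
  proof (unfold sesq_def, intro sum.cong refl)
    fix i assume "i \<in> {..<n}"
    then have "(\<Sum>j<n. 1\<^sub>m n $$ (i, j) * f j * cnj (f i))
        = (\<Sum>j<n. if j = i then f i * cnj (f i) else 0)"
      by (intro sum.cong) auto
    then show "(\<Sum>j<n. 1\<^sub>m n $$ (i, j) * f j * cnj (f i)) = f i * cnj (f i)"
      using \<open>i \<in> {..<n}\<close> by simp
  qed
  then show "sesq n (1\<^sub>m n) f f \<in> \<real> \<and> 0 \<le> Re (sesq n (1\<^sub>m n) f f)"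
    by (simp add: complex_mult_cnj sum_nonneg flip: of_real_sum)
qed auto

lemma is_test_zero: "is_test n (0\<^sub>m n n)"
proof -
  have "1\<^sub>m n - 0\<^sub>m n n = (1\<^sub>m n :: complex mat)" by (intro eq_matI) auto
  then show ?thesis unfolding is_test_def using psd_zero psd_one by simp
qed

lemma is_test_carrier: "is_test n T \<Longrightarrow> T \<in> carrier_mat n n"
  by (simp add: is_test_def psd_carrier)

lemma one_minus_one_minus_mat: "T \<in> carrier_mat n n \<Longrightarrow> 1\<^sub>m n - (1\<^sub>m n - T) = T"
  for T :: "'a :: ring_1 mat"
  by (intro eq_matI) auto

lemma is_test_compl: "is_test n T \<Longrightarrow> is_test n (1\<^sub>m n - T)"
  using one_minus_one_minus_mat[OF is_test_carrier] unfolding is_test_def by metis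

lemma renyi_eq_neg_log:
  assumes "\<alpha> < 1"
  shows "renyi \<alpha> p q = ereal (1 / (1 - \<alpha>)) * neg_log (\<Sum>x\<in>UNIV. p x powr \<alpha> * q x powr (1 - \<alpha>))"
  using assms by (simp add: renyi_def neg_log_def Let_def field_simps)

lemma D_test_err_min_bounds:
  assumes P: "density m P" and S: "density m S" and a: "0 < \<alpha>" "\<alpha> < 1"
  shows "D_test \<alpha> m P S \<le> neg_log (err_min \<alpha> m P S) + ereal (ln 4 / (1 - \<alpha>))"
    and "neg_log (err_min \<alpha> m P S) \<le> D_test \<alpha> m P S + ereal (ln 4 / (1 - \<alpha>))"
proof -
  define x where "x T = Re (mtrace (P * (1\<^sub>m m - T)))" for T
  define y where "y T = Re (mtrace (S * T))" for T
  define errors where "errors = (\<lambda>T. (x T, y T)) ` {T. is_test m T}"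
  have P_psd: "psd m P" and S_psd: "psd m S" and tr: "mtrace P = 1" "mtrace S = 1"
    using P S unfolding density_def by auto
  have accept_P: "Re (mtrace (P * T)) = 1 - x T"
    and reject_S: "Re (mtrace (S * (1\<^sub>m m - T))) = 1 - y T" if "is_test m T" for T
    unfolding x_def y_def
    using mtrace_mult_one_minus[OF psd_carrier is_test_carrier[OF that]] P_psd S_psd tr by simp_all
  have "x T \<in> {0..1} \<and> y T \<in> {0..1}" if T: "is_test m T" for T
  proof -
    have "psd m T" "psd m (1\<^sub>m m - T)" using T unfolding is_test_def by auto
    then show ?thesis
      using mtrace_psd_mult_nonneg[OF P_psd] mtrace_psd_mult_nonneg[OF S_psd]
        accept_P[OF T] reject_S[OF T]
      unfolding x_def y_def by fastforce
  qed
  then have range: "errors \<subseteq> {0..1} \<times> {0..1}" unfolding errors_def by auto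
  have compl: "(1 - u, 1 - v) \<in> errors" if uv_err: "(u, v) \<in> errors" for u v
  proof -
    obtain T where T: "is_test m T" and uv: "u = x T" "v = y T"
      using uv_err unfolding errors_def by blast
    have "x (1\<^sub>m m - T) = 1 - u" "y (1\<^sub>m m - T) = 1 - v"
      using accept_P[OF T] reject_S[OF T] is_test_carrier[OF T] unfolding uv x_def y_def
      by (simp_all add: one_minus_one_minus_mat)
    then show ?thesis using is_test_compl[OF T] unfolding errors_def by force
  qed
  have "D_test \<alpha> m P S = (SUP (u, v)\<in>errors. ereal (1 / (1 - \<alpha>)) * neg_log (affinity \<alpha> u v))"
  proof -
    have "renyi \<alpha> (test_map m T P) (test_map m T S)
        = ereal (1 / (1 - \<alpha>)) * neg_log (affinity \<alpha> (x T) (y T))" if "is_test m T" for T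
      using accept_P[OF that] reject_S[OF that] a
      by (simp add: renyi_eq_neg_log test_map_def affinity_def UNIV_bool x_def y_def add.commute)
    then show ?thesis unfolding D_test_def errors_def image_comp by (intro SUP_cong) auto
  qed
  moreover have "err_min \<alpha> m P S = (INF (u, v)\<in>errors. err_cost \<alpha> u v)"
    unfolding err_min_def errors_def image_comp by (simp add: err_cost_def x_def y_def comp_def)
  moreover have "errors \<noteq> {}" using is_test_zero unfolding errors_def by blast
  ultimately show "D_test \<alpha> m P S \<le> neg_log (err_min \<alpha> m P S) + ereal (ln 4 / (1 - \<alpha>))"
    and "neg_log (err_min \<alpha> m P S) \<le> D_test \<alpha> m P S + ereal (ln 4 / (1 - \<alpha>))"
    using SUP_neg_log_affinity_bounds[OF _ range compl a] by simp_all
qed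

section \<open>Asymptotics\<close>

lemma limsup_liminf_mono_scaled:
  fixes X Y :: "nat \<Rightarrow> ereal" and C :: real
  assumes le: "\<And>n. X n \<le> Y n + ereal C" and fin: "\<And>n. Y n \<noteq> - \<infinity>"
  shows "limsup (\<lambda>n. ereal (1 / real n) * X n) \<le> limsup (\<lambda>n. ereal (1 / real n) * Y n)"
    and "liminf (\<lambda>n. ereal (1 / real n) * X n) \<le> liminf (\<lambda>n. ereal (1 / real n) * Y n)"
proof -
  have "ereal (1 / real n) * X n \<le> ereal (C / real n) + ereal (1 / real n) * Y n" for n
  proof -
    have "ereal (1 / real n) * X n \<le> ereal (1 / real n) * (Y n + ereal C)"
      using le by (intro ereal_mult_left_mono) auto
    also have "\<dots> = ereal (C / real n) + ereal (1 / real n) * Y n"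
      using fin[of n] by (cases "Y n") (auto simp: add_divide_distrib)
    finally show ?thesis .
  qed
  then have ev: "\<forall>\<^sub>F n in sequentially.
      ereal (1 / real n) * X n \<le> ereal (C / real n) + ereal (1 / real n) * Y n"
    by simp
  have lim: "(\<lambda>n. ereal (C / real n)) \<longlonglongrightarrow> ereal 0"
    by (intro tendsto_ereal lim_const_over_n)
  show "limsup (\<lambda>n. ereal (1 / real n) * X n) \<le> limsup (\<lambda>n. ereal (1 / real n) * Y n)"
    using Limsup_mono[OF ev] ereal_limsup_lim_add[OF lim] by simp
  show "liminf (\<lambda>n. ereal (1 / real n) * X n) \<le> liminf (\<lambda>n. ereal (1 / real n) * Y n)"
    using Liminf_mono[OF ev] ereal_liminf_lim_add[OF lim] by simp
qed

lemma tendsto_of_limsup_liminf_eq: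
  fixes X Y :: "nat \<Rightarrow> 'a :: {complete_linorder, linorder_topology}"
  assumes "limsup X = limsup Y" "liminf X = liminf Y" "X \<longlonglongrightarrow> l"
  shows "Y \<longlonglongrightarrow> l"
  using assms by (metis Liminf_eq_Limsup lim_imp_Liminf lim_imp_Limsup trivial_limit_sequentially)

theorem mainTheorem7:
  fixes d :: nat and \<rho> \<sigma> :: "complex mat" and \<alpha> :: real
  assumes "density d \<rho>" and "density d \<sigma>" and "0 < \<alpha>" and "\<alpha> < 1"
  defines "L \<equiv> (\<lambda>n::nat. ereal (1 / real n) * D_test \<alpha> (d ^ n) (tpow \<rho> n) (tpow \<sigma> n))"
      and "R \<equiv> (\<lambda>n::nat. ereal (1 / real n) * neg_log (err_min \<alpha> (d ^ n) (tpow \<rho> n) (tpow \<sigma> n)))"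
  shows "limsup L = limsup R \<and> liminf L = liminf R \<and>
         ((\<exists>l. L \<longlonglongrightarrow> l) \<longleftrightarrow> (\<exists>l. R \<longlonglongrightarrow> l)) \<and>
         (\<forall>l. L \<longlonglongrightarrow> l \<longrightarrow> R \<longlonglongrightarrow> l)"
proof -
  define D where "D n = D_test \<alpha> (d ^ n) (tpow \<rho> n) (tpow \<sigma> n)" for n
  define N where "N n = neg_log (err_min \<alpha> (d ^ n) (tpow \<rho> n) (tpow \<sigma> n))" for n
  note bounds =
    D_test_err_min_bounds[OF density_tpow[OF assms(1)] density_tpow[OF assms(2)] assms(3,4)]
  have DN: "D n \<le> N n + ereal (ln 4 / (1 - \<alpha>))" and ND: "N n \<le> D n + ereal (ln 4 / (1 - \<alpha>))" for n
    unfolding D_def N_def using bounds by simp_all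
  have N_fin: "N n \<noteq> - \<infinity>" for n by (simp add: N_def neg_log_def)
  then have D_fin: "D n \<noteq> - \<infinity>" for n using ND[of n] by auto
  have "L = (\<lambda>n. ereal (1 / real n) * D n)" "R = (\<lambda>n. ereal (1 / real n) * N n)"
    unfolding L_def R_def D_def N_def by simp_all
  then have "limsup L = limsup R" "liminf L = liminf R"
    using limsup_liminf_mono_scaled[where X = D and Y = N, OF DN N_fin]
      limsup_liminf_mono_scaled[where X = N and Y = D, OF ND D_fin] by (simp_all add: order_antisym)
  then show ?thesis using tendsto_of_limsup_liminf_eq by metis
qed

end
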